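(* Let $s:\mathbb C_+\to\mathbb C_+$ be continuous and set $R(z)=s(z)^2+s(z)z+1$. For $E\in\mathbb R$, $\eta_0>0$ and $\eta_1\ge3\vee\eta_0$, suppose that there is a nonincreasing continuous function $r:[\eta_0,\eta_1]\to[0,1]$ such that $|R(E+\mathrm i\eta)|\le(1+|E+\mathrm i\eta|)\,r(\eta)$ for all $\eta\in[\eta_0,\eta_1]$. Then for all $z=E+\mathrm i\eta$ with $\eta\in[\eta_0,\eta_1]$ we have \[|s(z)-m(z)|=O\big(F_z(r(\eta))\big).\]
   Context: $\mathbb C_+$ is the open upper half-plane. $m(z)=\frac{-z+\sqrt{z^2-4}}2$ with the branch chosen so that $m(z)\in\mathbb C_+$ for $z\in\mathbb C_+$ (equivalently, branch cut $[-2,2]$ and $\sqrt{z^2-4}\sim z$ as $|z|\to\infty$). For $r\in[0,1]$, $F_z(r)=[(1+|z^2-4|^{-1/2})r]\wedge\sqrt r$. $O(\cdot)$ denotes a bound with an absolute constant. *)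

theory Defs
  imports "HOL-Analysis.Analysis"
begin

text \<open>Stieltjes transform of the semicircle law:
  m(z) = (-z + sqrt(z^2-4))/2, with sqrt(z^2-4) taken with branch cut [-2,2] and
  sqrt(z^2-4) ~ z at infinity; realised as csqrt(z-2) * csqrt(z+2) with principal roots.\<close>
definition msc :: "complex \<Rightarrow> complex" where
  "msc z = (- z + csqrt (z - 2) * csqrt (z + 2)) / 2"

definition Fz :: "complex \<Rightarrow> real \<Rightarrow> real" where
  "Fz z r = min ((1 + 1 / sqrt (cmod (z\<^sup>2 - 4))) * r) (sqrt r)"

end

theory Submission
  imports Defs
begin

text \<open>Write \<open>w = \<surd>(z\<^sup>2-4)\<close> and \<open>m\<close>, \<open>m' = m - w\<close> for the two roots of \<open>x\<^sup>2 + z x + 1\<close>.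
  Then \<open>R = (s - m)(s - m')\<close>, the two factors differ by \<open>w\<close>, and \<open>|s - m'| > \<eta>\<close>.
  Where \<open>|s - m| \<le> |s - m'|\<close>, the bound on the product directly gives
  \<open>|s - m| \<lesssim> (1 + |w|\<^sup>-\<^sup>1) r\<close> and \<open>|s - m|\<^sup>2 \<lesssim> r\<close>. For \<open>\<eta> \<ge> 3\<close> this is always the case.
  Otherwise, continuity in \<open>\<eta>\<close> yields a higher point \<open>\<eta>'\<close> where both factors have equal size;
  there \<open>z\<close> is bounded and \<open>|w|\<^sup>2 \<lesssim> r(\<eta>') \<le> r(\<eta>)\<close>. As \<open>|z|\<close> and \<open>|w|\<close> increase with \<open>\<eta>\<close>,
  this also bounds the factors at \<open>\<eta>\<close>.\<close>

definition sc_disc :: "complex \<Rightarrow> complex" where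
  "sc_disc z = csqrt (z - 2) * csqrt (z + 2)"

definition msc_other :: "complex \<Rightarrow> complex" where
  "msc_other z = (- z - sc_disc z) / 2"

lemma msc_eq: "msc z = (- z + sc_disc z) / 2"
  unfolding msc_def sc_disc_def ..

lemma sc_disc_power2: "(sc_disc z)\<^sup>2 = z\<^sup>2 - 4"
  unfolding sc_disc_def power_mult_distrib power2_csqrt by (simp add: power2_eq_square algebra_simps)

lemma norm_sc_disc_power2: "cmod (sc_disc z) ^ 2 = cmod (z\<^sup>2 - 4)"
  by (metis norm_power sc_disc_power2)

lemma norm_power2_le_norm_sc_disc: "cmod z ^ 2 \<le> cmod (sc_disc z) ^ 2 + 4"
  using norm_triangle_ineq2[of "z\<^sup>2" 4] by (simp add: norm_sc_disc_power2 norm_power)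

lemma norm_le_norm_sc_disc_add_2: "cmod z \<le> cmod (sc_disc z) + 2"
proof (rule power2_le_imp_le)
  have "(cmod (sc_disc z) + 2)\<^sup>2 = cmod (sc_disc z) ^ 2 + 4 + 4 * cmod (sc_disc z)"
    by (simp add: power2_eq_square algebra_simps)
  then show "(cmod z)\<^sup>2 \<le> (cmod (sc_disc z) + 2)\<^sup>2"
    using norm_power2_le_norm_sc_disc[of z] norm_ge_zero[of "sc_disc z"] by linarith
qed simp

lemma Fz_eq: "Fz z \<rho> = min ((1 + 1 / cmod (sc_disc z)) * \<rho>) (sqrt \<rho>)"
  unfolding Fz_def by (simp flip: norm_sc_disc_power2)

lemma dist_msc_mult_dist_msc_other: "(s - msc z) * (s - msc_other z) = s\<^sup>2 + s * z + 1"
proof -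
  have "(s - msc z) * (s - msc_other z) = s\<^sup>2 + s * z + (z\<^sup>2 - (sc_disc z)\<^sup>2) / 4"
    unfolding msc_eq msc_other_def by (simp add: field_simps power2_eq_square)
  then show ?thesis by (simp add: sc_disc_power2)
qed

lemma dist_msc_other_minus_dist_msc: "(s - msc_other z) - (s - msc z) = sc_disc z"
  unfolding msc_eq msc_other_def by (simp add: field_simps)

lemma csqrt_in_first_quadrant:
  assumes "0 < Im x"
  shows "0 < Re (csqrt x)" "0 < Im (csqrt x)"
proof -
  have "Im (csqrt x) \<noteq> 0" using assms Im_csqrt_eq_0_iff[of x]
    by (auto simp: complex_nonneg_Reals_iff)
  moreover have "Im (csqrt x) \<ge> 0" using assms complex_Re_le_cmod[of x] by simp
  ultimately show "0 < Im (csqrt x)" by linarith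
  have "Im x = 2 * Re (csqrt x) * Im (csqrt x)"
    by (metis Im_power2 power2_csqrt)
  then have "Re (csqrt x) \<noteq> 0" using assms by auto
  then show "0 < Re (csqrt x)" using Re_csqrt[of x] by linarith
qed

lemma Im_less_Im_sc_disc:
  assumes "0 < Im z"
  shows "Im z < Im (sc_disc z)"
proof -
  define w where "w = sc_disc z"
  have "0 < Im w"
    unfolding w_def sc_disc_def
    using csqrt_in_first_quadrant[of "z - 2"] csqrt_in_first_quadrant[of "z + 2"] assms
    by (simp add: add_pos_pos)
  have sq: "w\<^sup>2 = z\<^sup>2 - 4" unfolding w_def by (rule sc_disc_power2)
  have re: "(Re w)\<^sup>2 - (Im w)\<^sup>2 = (Re z)\<^sup>2 - (Im z)\<^sup>2 - 4"
    using arg_cong[OF sq, of Re] by (simp add: power2_eq_square)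
  have im: "Re w * Im w = Re z * Im z"
    using arg_cong[OF sq, of Im] by (simp add: power2_eq_square mult.commute)
  show ?thesis
  proof (rule ccontr)
    assume "\<not> Im z < Im (sc_disc z)"
    then have Im_le: "(Im w)\<^sup>2 \<le> (Im z)\<^sup>2"
      using \<open>0 < Im w\<close> unfolding w_def by (intro power_mono) auto
    \<comment> \<open>then \<open>|Re w| \<ge> |Re z|\<close> by \<open>im\<close>, contradicting \<open>re\<close>\<close>
    have "(Re z)\<^sup>2 * (Im w)\<^sup>2 \<le> (Re z)\<^sup>2 * (Im z)\<^sup>2"
      using Im_le by (simp add: mult_left_mono)
    also have "\<dots> = (Re w)\<^sup>2 * (Im w)\<^sup>2"
      using arg_cong[OF im, of "\<lambda>x. x\<^sup>2"] by (simp add: power_mult_distrib)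
    finally have "(Re z)\<^sup>2 \<le> (Re w)\<^sup>2" using \<open>0 < Im w\<close> by simp
    then show False using re Im_le by linarith
  qed
qed

lemma norm_sc_disc_pos: "0 < Im z \<Longrightarrow> 0 < cmod (sc_disc z)"
  using Im_less_Im_sc_disc abs_Im_le_cmod[of "sc_disc z"] by fastforce

lemma Im_less_norm_dist_msc_other:
  assumes "0 < Im z" "0 < Im s"
  shows "Im z < cmod (s - msc_other z)"
proof -
  have "Im (s - msc_other z) = Im s + (Im z + Im (sc_disc z)) / 2"
    unfolding msc_other_def by (simp add: field_simps)
  then have "Im z < Im (s - msc_other z)" using assms Im_less_Im_sc_disc[OF assms(1)] by simp
  then show ?thesis using abs_Im_le_cmod[of "s - msc_other z"] by linarith
qed

lemma continuous_on_sc_disc: "continuous_on {z. 0 < Im z} sc_disc"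
proof -
  have "continuous_on {z. 0 < Im z} (\<lambda>z. csqrt (z + c))" if "Im c = 0" for c
  proof (rule continuous_on_compose2[OF continuous_on_csqrt])
    show "continuous_on {z. 0 < Im z} (\<lambda>z. z + c)" by (intro continuous_intros)
    show "(\<lambda>z. z + c) ` {z. 0 < Im z} \<subseteq> - \<real>\<^sub>\<le>\<^sub>0"
      using that by (auto simp: complex_nonpos_Reals_iff)
  qed
  from this[of "-2"] this[of 2] show ?thesis
    unfolding sc_disc_def diff_conv_add_uminus by (auto intro!: continuous_intros)
qed

lemma norm_Complex_mono:
  assumes "0 \<le> t" "t \<le> t'"
  shows "cmod (Complex E t) \<le> cmod (Complex E t')"
  using assms unfolding complex_norm by (intro real_sqrt_le_mono add_left_mono power_mono) auto

lemma norm_sc_disc_Complex_mono: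
  assumes "0 \<le> t" "t \<le> t'"
  shows "cmod (sc_disc (Complex E t)) \<le> cmod (sc_disc (Complex E t'))"
proof -
  have sq: "(Complex E u)\<^sup>2 - 4 = Complex (E\<^sup>2 - u\<^sup>2 - 4) (2 * E * u)" for u
    by (simp add: complex_eq_iff power2_eq_square)
  have "t\<^sup>2 \<le> t'\<^sup>2" using assms by (intro power_mono) auto
  then have "0 \<le> (t'\<^sup>2 - t\<^sup>2) * (t'\<^sup>2 + t\<^sup>2 + 2 * E\<^sup>2 + 8)" by simp
  also have "\<dots> = (E\<^sup>2 - t'\<^sup>2 - 4)\<^sup>2 + (2 * E * t')\<^sup>2 - ((E\<^sup>2 - t\<^sup>2 - 4)\<^sup>2 + (2 * E * t)\<^sup>2)"
    by (simp add: power2_eq_square algebra_simps)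
  finally have "cmod ((Complex E t)\<^sup>2 - 4) \<le> cmod ((Complex E t')\<^sup>2 - 4)"
    unfolding sq complex_norm by (intro real_sqrt_le_mono) linarith
  then have "cmod (sc_disc (Complex E t)) ^ 2 \<le> cmod (sc_disc (Complex E t')) ^ 2"
    by (simp add: norm_sc_disc_power2)
  then show ?thesis by (rule power2_le_imp_le) simp
qed

lemma norm_dist_msc_mult_le:
  assumes "cmod (s\<^sup>2 + s * z + 1) \<le> (1 + cmod z) * \<rho>"
  shows "cmod (s - msc z) * cmod (s - msc_other z) \<le> (1 + cmod z) * \<rho>"
  using assms by (simp flip: norm_mult add: dist_msc_mult_dist_msc_other)

lemma norm_sc_disc_le_add:
  "cmod (sc_disc z) \<le> cmod (s - msc z) + cmod (s - msc_other z)"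
  using norm_triangle_ineq4[of "s - msc_other z" "s - msc z"]
  by (simp add: dist_msc_other_minus_dist_msc)

lemma norm_dist_msc_le_add:
  "cmod (s - msc z) \<le> cmod (s - msc_other z) + cmod (sc_disc z)"
  using norm_triangle_ineq4[of "s - msc_other z" "sc_disc z"]
  by (metis add_diff_cancel_left' diff_diff_eq2 dist_msc_other_minus_dist_msc)

lemma dist_msc_le_Fz_if_closer:
  assumes "0 < Im z" "cmod (s - msc z) \<le> cmod (s - msc_other z)"
    and "cmod (s\<^sup>2 + s * z + 1) \<le> (1 + cmod z) * \<rho>" "0 \<le> \<rho>" "\<rho> \<le> 1"
  shows "cmod (s - msc z) \<le> 12 * Fz z \<rho>"
proof -
  define A B W t where "A = cmod (s - msc z)" and "B = cmod (s - msc_other z)"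
    and "W = cmod (sc_disc z)" and "t = cmod z"
  have AB: "A * B \<le> (1 + t) * \<rho>" and W_le: "W \<le> A + B"
    unfolding A_def B_def W_def t_def using assms(3) norm_dist_msc_mult_le norm_sc_disc_le_add by auto
  have "0 < W" unfolding W_def using assms(1) by (rule norm_sc_disc_pos)
  have "1 + t \<le> 3 + W" using norm_le_norm_sc_disc_add_2[of z] by (simp add: W_def t_def)
  then have "(1 + t) * \<rho> \<le> (3 + W) * \<rho>" using assms(4) by (rule mult_right_mono)
  then have AB': "A * B \<le> (3 + W) * \<rho>" using AB by linarith
  have AA: "A * A \<le> A * B" unfolding A_def B_def by (rule mult_left_mono[OF assms(2) norm_ge_zero])
  have "A * W \<le> A * (A + B)" using W_le by (simp add: A_def mult_left_mono)
  also have "\<dots> \<le> 2 * (A * B)" using AA by (simp add: algebra_simps)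
  also have "\<dots> \<le> 2 * ((3 + 3 * W) * \<rho>)"
    using AB' mult_right_mono[of "3 + W" "3 + 3 * W" \<rho>] \<open>0 < W\<close> assms(4) by linarith
  also have "\<dots> = 6 * ((1 + W) * \<rho>)" by (simp add: algebra_simps)
  finally have lin: "A \<le> 6 * ((1 + 1 / W) * \<rho>)" using \<open>0 < W\<close> by (simp add: field_simps)
  have A_sq: "A\<^sup>2 \<le> (3 + W) * \<rho>" using AA AB' by (simp add: power2_eq_square)
  have "A \<le> 12 * sqrt \<rho>"
  proof (cases "W \<le> 1")
    case True
    then have "(3 + W) * \<rho> \<le> 4 * \<rho>" using assms(4) by (simp add: mult_right_mono)
    then have "A\<^sup>2 \<le> 4 * \<rho>" using A_sq by linarith
    then have "A \<le> sqrt (4 * \<rho>)" by (rule real_le_rsqrt)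
    then have "A \<le> 2 * sqrt \<rho>" by (simp add: real_sqrt_mult)
    then show ?thesis using real_sqrt_ge_zero[OF assms(4)] by linarith
  next
    case False
    then have "1 + 1 / W \<le> 2" by simp
    then have "(1 + 1 / W) * \<rho> \<le> 2 * \<rho>" using assms(4) by (rule mult_right_mono)
    then have "A \<le> 12 * \<rho>" using lin by linarith
    moreover have "\<rho> \<le> sqrt \<rho>"
      using assms(4,5) by (simp add: real_le_rsqrt power2_eq_square mult_left_le_one_le)
    ultimately show ?thesis by linarith
  qed
  moreover have "0 \<le> (1 + 1 / W) * \<rho>" using \<open>0 < W\<close> assms(4) by simp
  ultimately show ?thesis
    using lin unfolding Fz_eq A_def W_def by (simp add: min_mult_distrib_left)
qed

lemma norm_bounds_at_crossing:
  assumes "cmod (s - msc z) = cmod (s - msc_other z)"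
    and "cmod (s\<^sup>2 + s * z + 1) \<le> (1 + cmod z) * \<rho>" "\<rho> \<le> 1"
  shows "cmod z \<le> 6" "cmod (sc_disc z) ^ 2 \<le> 28 * \<rho>"
proof -
  define A W t where "A = cmod (s - msc z)" and "W = cmod (sc_disc z)" and "t = cmod z"
  have A_sq: "A\<^sup>2 \<le> (1 + t) * \<rho>"
    using norm_dist_msc_mult_le[OF assms(2)] assms(1) by (simp add: A_def t_def power2_eq_square)
  have "W \<le> 2 * A" using norm_sc_disc_le_add[of z s] assms(1) by (simp add: A_def W_def)
  then have "W\<^sup>2 \<le> 4 * A\<^sup>2"
    using power_mono[of W "2 * A" 2] by (simp add: W_def power_mult_distrib)
  then have W_sq: "W\<^sup>2 \<le> 4 * ((1 + t) * \<rho>)" using A_sq by linarith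
  have "0 < 1 + t" by (simp add: t_def add_pos_nonneg)
  moreover have "0 \<le> (1 + t) * \<rho>" using A_sq zero_le_power2[of A] by linarith
  ultimately have "0 \<le> \<rho>" by (simp add: zero_le_mult_iff)
  have "t\<^sup>2 - 4 \<le> W\<^sup>2" using norm_power2_le_norm_sc_disc[of z] unfolding W_def t_def by linarith
  also have "\<dots> \<le> 4 * ((1 + t) * \<rho>)" by (fact W_sq)
  also have "\<dots> \<le> 4 * (1 + t)" using mult_left_le[OF assms(3) less_imp_le[OF \<open>0 < 1 + t\<close>]] by simp
  finally have "t\<^sup>2 - 4 \<le> 4 * (1 + t)" .
  then have "(t - 2)\<^sup>2 < 4\<^sup>2" by (simp add: power2_eq_square algebra_simps)
  then have "t - 2 < 4" by (rule power2_less_imp_less) simp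
  then show "cmod z \<le> 6" by (simp add: t_def)
  then have "(1 + t) * \<rho> \<le> 7 * \<rho>" using \<open>0 \<le> \<rho>\<close> by (simp add: t_def mult_right_mono)
  then show "cmod (sc_disc z) ^ 2 \<le> 28 * \<rho>" using W_sq by (simp add: W_def)
qed

lemma dist_msc_le_Fz_if_farther:
  assumes "cmod (s - msc_other z) \<le> cmod (s - msc z)"
    and "cmod (s\<^sup>2 + s * z + 1) \<le> (1 + cmod z) * \<rho>"
    and "cmod z \<le> 6" "0 < cmod (sc_disc z)" "cmod (sc_disc z) ^ 2 \<le> 28 * \<rho>"
  shows "cmod (s - msc z) \<le> 54 * Fz z \<rho>"
proof -
  define A B W t where "A = cmod (s - msc z)" and "B = cmod (s - msc_other z)"
    and "W = cmod (sc_disc z)" and "t = cmod z"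
  have "0 < W" "W\<^sup>2 \<le> 28 * \<rho>" using assms(4,5) by (simp_all add: W_def)
  then have "0 < \<rho>" using zero_less_power[OF \<open>0 < W\<close>, of 2] by linarith
  have "(1 + t) * \<rho> \<le> 7 * \<rho>" using assms(3) \<open>0 < \<rho>\<close> by (simp add: t_def)
  moreover have "B\<^sup>2 \<le> A * B" using assms(1) by (simp add: A_def B_def power2_eq_square mult_right_mono)
  ultimately have B_sq: "B\<^sup>2 \<le> 7 * \<rho>"
    using norm_dist_msc_mult_le[OF assms(2)] unfolding A_def B_def t_def by linarith
  have "A \<le> B + W" using norm_dist_msc_le_add by (simp add: A_def B_def W_def)
  then have "A\<^sup>2 \<le> (B + W)\<^sup>2" by (simp add: A_def power_mono)
  also have "\<dots> \<le> 2 * B\<^sup>2 + 2 * W\<^sup>2"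
    using zero_le_power2[of "B - W"] by (simp add: power2_eq_square algebra_simps)
  finally have "A\<^sup>2 \<le> 81 * \<rho>" using B_sq \<open>W\<^sup>2 \<le> 28 * \<rho>\<close> \<open>0 < \<rho>\<close> by linarith
  then have "A \<le> sqrt (81 * \<rho>)" by (rule real_le_rsqrt)
  then have A_le: "A \<le> 9 * sqrt \<rho>" by (simp add: real_sqrt_mult)
  have "W \<le> sqrt (36 * \<rho>)" using \<open>W\<^sup>2 \<le> 28 * \<rho>\<close> \<open>0 < \<rho>\<close> by (intro real_le_rsqrt) linarith
  then have "W \<le> 6 * sqrt \<rho>" by (simp add: real_sqrt_mult)
  then have "W * sqrt \<rho> \<le> (6 * sqrt \<rho>) * sqrt \<rho>" by (rule mult_right_mono) (use \<open>0 < \<rho>\<close> in simp)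
  also have "\<dots> = 6 * \<rho>" using \<open>0 < \<rho>\<close> by (simp add: mult.assoc)
  finally have "sqrt \<rho> \<le> 6 * \<rho> / W" unfolding pos_le_divide_eq[OF \<open>0 < W\<close>] by (simp add: mult.commute)
  also have "\<dots> = 6 * (\<rho> / W)" by simp
  also have "\<dots> \<le> 6 * ((1 + 1 / W) * \<rho>)" using \<open>0 < \<rho>\<close> by (simp add: field_simps)
  finally have "A \<le> 54 * ((1 + 1 / W) * \<rho>)" using A_le by linarith
  moreover have "A \<le> 54 * sqrt \<rho>" using A_le real_sqrt_ge_zero[of \<rho>] \<open>0 < \<rho>\<close> by linarith
  ultimately show ?thesis unfolding Fz_eq A_def W_def by (simp add: min_mult_distrib_left)
qed

lemma dist_msc_le_dist_msc_other_if_Im_ge_3: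
  assumes "3 \<le> Im z" "0 < Im s" "cmod (s\<^sup>2 + s * z + 1) \<le> 1 + cmod z"
  shows "cmod (s - msc z) \<le> cmod (s - msc_other z)"
proof (rule ccontr)
  define A B W T where "A = cmod (s - msc z)" and "B = cmod (s - msc_other z)"
    and "W = cmod (sc_disc z)" and "T = cmod z"
  assume "\<not> cmod (s - msc z) \<le> cmod (s - msc_other z)"
  then have "B < A" by (simp add: A_def B_def)
  have "3 < B" using Im_less_norm_dist_msc_other[of z s] assms(1,2) by (simp add: B_def)
  have AB: "A * B \<le> 1 + T"
    using norm_dist_msc_mult_le[of s z 1] assms(3) by (simp add: A_def B_def T_def)
  have "3\<^sup>2 < B\<^sup>2" using \<open>3 < B\<close> by (intro power_strict_mono) auto
  moreover have "B\<^sup>2 < A * B" using \<open>B < A\<close> \<open>3 < B\<close> by (simp add: power2_eq_square)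
  ultimately have "8 < T" using AB by simp
  have "W < 2 * A" using norm_sc_disc_le_add[of z s] \<open>B < A\<close> by (simp add: A_def B_def W_def)
  have "3 * W \<le> B * W" using \<open>3 < B\<close> by (simp add: W_def mult_right_mono)
  also have "\<dots> < B * (2 * A)" using \<open>W < 2 * A\<close> \<open>3 < B\<close> by (simp add: mult_strict_left_mono)
  also have "\<dots> = 2 * (A * B)" by (simp add: ac_simps)
  also have "\<dots> \<le> 2 * (1 + T)" using AB by simp
  finally have "3 * W < 2 * (1 + T)" .
  then have "(3 * W)\<^sup>2 < (2 * (1 + T))\<^sup>2" by (intro power_strict_mono) (auto simp: W_def)
  moreover have "T\<^sup>2 \<le> W\<^sup>2 + 4" unfolding T_def W_def by (rule norm_power2_le_norm_sc_disc)
  moreover have "(3 * W)\<^sup>2 = 9 * W\<^sup>2" "(2 * (1 + T))\<^sup>2 = 4 + 8 * T + 4 * T\<^sup>2"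
    by (simp_all add: power2_eq_square algebra_simps)
  ultimately have "5 * T\<^sup>2 < 40 + 8 * T" by linarith
  moreover have "8 * T < T\<^sup>2" using \<open>8 < T\<close> by (simp add: power2_eq_square)
  ultimately show False using \<open>8 < T\<close> by linarith
qed

lemma Fz_nonneg: "0 \<le> \<rho> \<Longrightarrow> 0 \<le> Fz z \<rho>"
  unfolding Fz_def by simp

lemma continuous_on_msc: "continuous_on {z. 0 < Im z} msc"
  unfolding msc_eq[abs_def] using continuous_on_sc_disc by (intro continuous_intros) auto

lemma continuous_on_msc_other: "continuous_on {z. 0 < Im z} msc_other"
  unfolding msc_other_def[abs_def] using continuous_on_sc_disc by (intro continuous_intros) auto

lemma crossing_point_on_vertical_segment:
  assumes "continuous_on {z. 0 < Im z} s" "0 < \<eta>" "\<eta> \<le> \<eta>1"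
    and "cmod (s (Complex E \<eta>) - msc_other (Complex E \<eta>)) \<le> cmod (s (Complex E \<eta>) - msc (Complex E \<eta>))"
    and "cmod (s (Complex E \<eta>1) - msc (Complex E \<eta>1)) \<le> cmod (s (Complex E \<eta>1) - msc_other (Complex E \<eta>1))"
  obtains \<eta>' where "\<eta> \<le> \<eta>'" "\<eta>' \<le> \<eta>1"
    "cmod (s (Complex E \<eta>') - msc (Complex E \<eta>')) = cmod (s (Complex E \<eta>') - msc_other (Complex E \<eta>'))"
proof -
  define g where "g z = cmod (s z - msc_other z) - cmod (s z - msc z)" for z
  have "continuous_on {z. 0 < Im z} g"
    unfolding g_def using assms(1) continuous_on_msc continuous_on_msc_other
    by (intro continuous_intros)
  moreover have "continuous_on {\<eta>..\<eta>1} (Complex E)"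
    unfolding Complex_eq by (intro continuous_intros)
  moreover have "Complex E ` {\<eta>..\<eta>1} \<subseteq> {z. 0 < Im z}" using assms(2) by auto
  ultimately have "continuous_on {\<eta>..\<eta>1} (\<lambda>t. g (Complex E t))"
    by (rule continuous_on_compose2)
  then obtain \<eta>' where "\<eta> \<le> \<eta>'" "\<eta>' \<le> \<eta>1" "g (Complex E \<eta>') = 0"
    using IVT'[of "\<lambda>t. g (Complex E t)" \<eta> 0 \<eta>1] assms(3-5) by (auto simp: g_def)
  then show ?thesis using that by (simp add: g_def)
qed

lemma dist_msc_le_Fz_on_vertical_segment:
  assumes s_cont: "continuous_on {z. 0 < Im z} s" and s_pos: "\<And>z. 0 < Im z \<Longrightarrow> 0 < Im (s z)"
    and "0 < \<eta>0" "3 \<le> \<eta>1" "\<eta> \<in> {\<eta>0..\<eta>1}"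
    and r_bounds: "\<And>t. t \<in> {\<eta>0..\<eta>1} \<Longrightarrow> 0 \<le> r t \<and> r t \<le> 1"
    and r_antimono: "\<And>x y. x \<in> {\<eta>0..\<eta>1} \<Longrightarrow> y \<in> {\<eta>0..\<eta>1} \<Longrightarrow> x \<le> y \<Longrightarrow> r y \<le> r x"
    and R_bound: "\<And>t. t \<in> {\<eta>0..\<eta>1} \<Longrightarrow>
      cmod ((s (Complex E t))\<^sup>2 + s (Complex E t) * Complex E t + 1) \<le> (1 + cmod (Complex E t)) * r t"
  shows "cmod (s (Complex E \<eta>) - msc (Complex E \<eta>)) \<le> 54 * Fz (Complex E \<eta>) (r \<eta>)"
proof -
  define Z where "Z = Complex E"
  have "0 < \<eta>" "\<eta> \<le> \<eta>1" using assms(3,5) by auto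
  show ?thesis
  proof (cases "cmod (s (Z \<eta>) - msc (Z \<eta>)) \<le> cmod (s (Z \<eta>) - msc_other (Z \<eta>))")
    case True
    then have "cmod (s (Z \<eta>) - msc (Z \<eta>)) \<le> 12 * Fz (Z \<eta>) (r \<eta>)"
      using \<open>0 < \<eta>\<close> r_bounds[OF assms(5)] R_bound[OF assms(5)]
      by (intro dist_msc_le_Fz_if_closer) (auto simp: Z_def)
    then show ?thesis using Fz_nonneg[of "r \<eta>" "Z \<eta>"] r_bounds[OF assms(5)] by (simp add: Z_def)
  next
    case False
    have "\<eta>1 \<in> {\<eta>0..\<eta>1}" using assms(5) by simp
    then have "cmod (s (Z \<eta>1) - msc (Z \<eta>1)) \<le> cmod (s (Z \<eta>1) - msc_other (Z \<eta>1))"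
      using assms(3,4) s_pos r_bounds R_bound mult_left_le[of "r \<eta>1" "1 + cmod (Z \<eta>1)"]
      by (intro dist_msc_le_dist_msc_other_if_Im_ge_3) (auto simp: Z_def intro: order_trans)
    moreover have "cmod (s (Z \<eta>) - msc_other (Z \<eta>)) \<le> cmod (s (Z \<eta>) - msc (Z \<eta>))"
      using False by simp
    ultimately obtain \<eta>' where "\<eta> \<le> \<eta>'" "\<eta>' \<le> \<eta>1"
      and crossing: "cmod (s (Z \<eta>') - msc (Z \<eta>')) = cmod (s (Z \<eta>') - msc_other (Z \<eta>'))"
      using crossing_point_on_vertical_segment[OF s_cont \<open>0 < \<eta>\<close> \<open>\<eta> \<le> \<eta>1\<close>, where E = E, folded Z_def] by blast
    have \<eta>': "\<eta>' \<in> {\<eta>0..\<eta>1}" using \<open>\<eta> \<le> \<eta>'\<close> \<open>\<eta>' \<le> \<eta>1\<close> assms(5) by simp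
    have "cmod (Z \<eta>') \<le> 6" "cmod (sc_disc (Z \<eta>')) ^ 2 \<le> 28 * r \<eta>'"
      using norm_bounds_at_crossing[OF crossing] R_bound[OF \<eta>'] r_bounds[OF \<eta>'] by (auto simp: Z_def)
    moreover have "cmod (Z \<eta>) \<le> cmod (Z \<eta>')"
      unfolding Z_def using \<open>0 < \<eta>\<close> \<open>\<eta> \<le> \<eta>'\<close> by (simp add: norm_Complex_mono)
    moreover have "cmod (sc_disc (Z \<eta>)) ^ 2 \<le> cmod (sc_disc (Z \<eta>')) ^ 2"
      unfolding Z_def using \<open>0 < \<eta>\<close> \<open>\<eta> \<le> \<eta>'\<close> by (simp add: norm_sc_disc_Complex_mono power_mono)
    moreover have "r \<eta>' \<le> r \<eta>" using r_antimono[OF assms(5) \<eta>' \<open>\<eta> \<le> \<eta>'\<close>] .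
    moreover have "0 < cmod (sc_disc (Z \<eta>))" using \<open>0 < \<eta>\<close> norm_sc_disc_pos[of "Z \<eta>"] by (simp add: Z_def)
    ultimately have "cmod (Z \<eta>) \<le> 6" "cmod (sc_disc (Z \<eta>)) ^ 2 \<le> 28 * r \<eta>" by linarith+
    then show ?thesis
      using False R_bound[OF assms(5)] \<open>0 < cmod (sc_disc (Z \<eta>))\<close>
      by (intro dist_msc_le_Fz_if_farther) (auto simp: Z_def)
  qed
qed

theorem lemma5p6:
  "\<exists>C::real. \<forall>(s::complex \<Rightarrow> complex) (E::real) (\<eta>0::real) (\<eta>1::real) (r::real \<Rightarrow> real).
     (continuous_on {z. 0 < Im z} s \<and> (\<forall>z. 0 < Im z \<longrightarrow> 0 < Im (s z)) \<and>
      0 < \<eta>0 \<and> max 3 \<eta>0 \<le> \<eta>1 \<and>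
      continuous_on {\<eta>0..\<eta>1} r \<and>
      (\<forall>\<eta>\<in>{\<eta>0..\<eta>1}. 0 \<le> r \<eta> \<and> r \<eta> \<le> 1) \<and>
      (\<forall>x\<in>{\<eta>0..\<eta>1}. \<forall>y\<in>{\<eta>0..\<eta>1}. x \<le> y \<longrightarrow> r y \<le> r x) \<and>
      (\<forall>\<eta>\<in>{\<eta>0..\<eta>1}.
         cmod ((s (Complex E \<eta>))\<^sup>2 + s (Complex E \<eta>) * Complex E \<eta> + 1)
           \<le> (1 + cmod (Complex E \<eta>)) * r \<eta>))
     \<longrightarrow> (\<forall>\<eta>\<in>{\<eta>0..\<eta>1}.
           cmod (s (Complex E \<eta>) - msc (Complex E \<eta>)) \<le> C * Fz (Complex E \<eta>) (r \<eta>))"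
  by (intro exI[of _ 54] allI impI ballI dist_msc_le_Fz_on_vertical_segment) auto

end
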